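(* There exists a constant $C>0$ such that infinitely many integers $\ell\ge1$ satisfy $$\sum_{i=1}^{\ell-1}i\,q(i)\le C\,\ell\,Q(\ell).$$
   Context: A sign-decorated binary tree is a finite planar rooted tree in which every internal vertex (node) has exactly two ordered children and carries a sign $\oplus$ or $\ominus$; $\mathrm{LIS}(t)$ is the maximal number of leaves in a set of leaves whose pairwise highest common ancestors all carry $\oplus$. Fix $p\in(0,1)$. $T$ is a critical binary Bienaymé–Galton–Watson tree with i.i.d. node signs, $\mathbb P(\oplus)=p$; $q(k)=\mathbb P(\mathrm{LIS}(T)=k)$, $Q(k)=\mathbb P(\mathrm{LIS}(T)\ge k)$. *)

theory Defs
  imports "HOL-Analysis.Analysis" "HOL-Library.Sublist"
begin

text \<open>Sign-decorated binary trees: a leaf, or an internal node carrying a sign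
  (True = plus, False = minus) with an ordered pair (left, right) of subtrees.\<close>
datatype stree = Leaf | Node bool stree stree

text \<open>Vertices are addressed by paths from the root (False = left, True = right).\<close>
fun leaves :: "stree \<Rightarrow> bool list set" where
  "leaves Leaf = {[]}"
| "leaves (Node s l r) = Cons False ` leaves l \<union> Cons True ` leaves r"

fun sign_at :: "stree \<Rightarrow> bool list \<Rightarrow> bool option" where
  "sign_at Leaf w = None"
| "sign_at (Node s l r) [] = Some s"
| "sign_at (Node s l r) (False # w) = sign_at l w"
| "sign_at (Node s l r) (True # w) = sign_at r w"

definition hca :: "bool list \<Rightarrow> bool list \<Rightarrow> bool list" where
  "hca u v = longest_common_prefix u v"

definition plus_leafset :: "stree \<Rightarrow> bool list set \<Rightarrow> bool" where
  "plus_leafset t S \<longleftrightarrow> S \<subseteq> leaves t \<and>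
     (\<forall>u\<in>S. \<forall>v\<in>S. u \<noteq> v \<longrightarrow> sign_at t (hca u v) = Some True)"

definition LIS :: "stree \<Rightarrow> nat" where
  "LIS t = Max (card ` {S. plus_leafset t S})"

fun n_plus :: "stree \<Rightarrow> nat" where
  "n_plus Leaf = 0"
| "n_plus (Node s l r) = (if s then 1 else 0) + n_plus l + n_plus r"

fun n_minus :: "stree \<Rightarrow> nat" where
  "n_minus Leaf = 0"
| "n_minus (Node s l r) = (if s then 0 else 1) + n_minus l + n_minus r"

fun n_vert :: "stree \<Rightarrow> nat" where
  "n_vert Leaf = 1"
| "n_vert (Node s l r) = 1 + n_vert l + n_vert r"

text \<open>Law of the critical binary BGW tree (offspring 0 or 2, each with probability 1/2)
  with i.i.d. signs, P(plus) = p: probability that T equals the finite tree t.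
  (T is a.s. finite, so this point mass function determines its law.)\<close>
definition bgw_prob :: "real \<Rightarrow> stree \<Rightarrow> real" where
  "bgw_prob p t = (1/2) ^ n_vert t * p ^ n_plus t * (1 - p) ^ n_minus t"

definition q :: "real \<Rightarrow> nat \<Rightarrow> real" where
  "q p k = infsum (bgw_prob p) {t. LIS t = k}"

definition Q :: "real \<Rightarrow> nat \<Rightarrow> real" where
  "Q p k = infsum (bgw_prob p) {t. LIS t \<ge> k}"

end

theory Submission
  imports Defs
begin

(* Since LIS adds up over the two subtrees of a plus node and takes the maximum at a minus
   node, splitting the BGW tree at its root gives, for k >= 2,
     p * sum_{1<=j<k} q(j) * (Q(k-j) - Q(k)) = Q(k)^2.
   With D = 1/Q this reads p * sum_j q(j) * (D(k) - D(k-j)) <= 1.  Summing over k in (2M, 5M]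
   and keeping only j <= M yields p * B(M+1) * (D(4M) - D(2M)) <= 3M, where
   B(l) = sum_{1<=i<l} i q(i).  If B(l) > C l Q(l) held for all large l, with C = 12/p + 12,
   then Q(2M) <= 5/4 Q(4M) for all large M.  Along l = 2^n L the product l Q(l) would then grow
   like (8/5)^n, while Abel summation gives B(l) <= sum_{1<=i<l} Q(i) <= const + 3 l Q(l),
   contradicting B(l) > 12 l Q(l). *)

fun lis :: "stree \<Rightarrow> nat" where
  "lis Leaf = 1"
| "lis (Node s l r) = (if s then lis l + lis r else max (lis l) (lis r))"

lemma lis_ge_1: "1 \<le> lis t"
  by (induction t) auto

lemma hca_Cons_Cons: "hca (a # u) (b # v) = (if a = b then a # hca u v else [])"
  by (simp add: hca_def)

lemma finite_leaves: "finite (leaves t)"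
  by (induction t) auto

lemma plus_leafset_finite: "plus_leafset t S \<Longrightarrow> finite S"
  unfolding plus_leafset_def using finite_leaves finite_subset by blast

lemma plus_leafset_empty [simp]: "plus_leafset t {}"
  by (simp add: plus_leafset_def)

lemma plus_leafset_Leaf: "plus_leafset Leaf S \<longleftrightarrow> S \<subseteq> {[]}"
  unfolding plus_leafset_def by auto

lemma plus_leafset_Node_image:
  "plus_leafset (Node s l r) (Cons False ` A \<union> Cons True ` B) \<longleftrightarrow>
     plus_leafset l A \<and> plus_leafset r B \<and> (s \<or> A = {} \<or> B = {})"
  (is "?lhs \<longleftrightarrow> _")
proof
  assume ?lhs
  then have sub: "A \<subseteq> leaves l" "B \<subseteq> leaves r"
    and hca: "\<And>u v. u \<in> Cons False ` A \<union> Cons True ` B \<Longrightarrow> v \<in> Cons False ` A \<union> Cons True ` B \<Longrightarrow>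
           u \<noteq> v \<Longrightarrow> sign_at (Node s l r) (hca u v) = Some True"
    unfolding plus_leafset_def by auto
  have "sign_at l (hca u v) = Some True" if "u \<in> A" "v \<in> A" "u \<noteq> v" for u v
    using hca[of "False # u" "False # v"] that by (simp add: hca_Cons_Cons)
  moreover have "sign_at r (hca u v) = Some True" if "u \<in> B" "v \<in> B" "u \<noteq> v" for u v
    using hca[of "True # u" "True # v"] that by (simp add: hca_Cons_Cons)
  moreover have "s" if "u \<in> A" "v \<in> B" for u v
    using hca[of "False # u" "True # v"] that by (simp add: hca_Cons_Cons)
  ultimately show "plus_leafset l A \<and> plus_leafset r B \<and> (s \<or> A = {} \<or> B = {})"
    using sub unfolding plus_leafset_def by blast
qed (auto simp: plus_leafset_def hca_Cons_Cons; meson)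

lemma set_split_Cons:
  assumes "[] \<notin> S"
  shows "S = Cons False ` {u. False # u \<in> S} \<union> Cons True ` {u. True # u \<in> S}"
proof -
  have "x \<in> Cons False ` {u. False # u \<in> S} \<union> Cons True ` {u. True # u \<in> S}" if "x \<in> S" for x
  proof -
    obtain b u where "x = b # u" using \<open>x \<in> S\<close> assms by (cases x) auto
    then show ?thesis using \<open>x \<in> S\<close> by (cases b) auto
  qed
  then show ?thesis by auto
qed

lemma card_Cons_image_Un:
  "finite A \<Longrightarrow> finite B \<Longrightarrow> card (Cons False ` A \<union> Cons True ` B) = card A + card B"
  by (subst card_Un_disjoint) (auto simp: card_image)

lemma card_le_lis: "plus_leafset t S \<Longrightarrow> card S \<le> lis t"
proof (induction t arbitrary: S)
  case Leaf
  then show ?case by (auto simp: plus_leafset_Leaf dest: card_mono[rotated])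
next
  case (Node s l r)
  define A where "A = {u. False # u \<in> S}"
  define B where "B = {u. True # u \<in> S}"
  have "[] \<notin> S" using Node.prems by (auto simp: plus_leafset_def)
  then have S: "S = Cons False ` A \<union> Cons True ` B"
    unfolding A_def B_def by (rule set_split_Cons)
  with Node.prems have A: "plus_leafset l A" and B: "plus_leafset r B" and "s \<or> A = {} \<or> B = {}"
    by (simp_all add: plus_leafset_Node_image)
  moreover have "card S = card A + card B"
    using S A B by (simp add: card_Cons_image_Un plus_leafset_finite)
  ultimately show ?case using Node.IH(1)[OF A] Node.IH(2)[OF B] by auto
qed

lemma ex_plus_leafset_card_lis: "\<exists>S. plus_leafset t S \<and> card S = lis t"
proof (induction t)
  case Leaf
  show ?case by (auto simp: plus_leafset_Leaf intro: exI[of _ "{[]}"])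
next
  case (Node s l r)
  then obtain A B where A: "plus_leafset l A" "card A = lis l" and B: "plus_leafset r B" "card B = lis r"
    by blast
  have fin: "finite A" "finite B" using A B by (simp_all add: plus_leafset_finite)
  consider "s" | "\<not> s" "lis r \<le> lis l" | "\<not> s" "lis l \<le> lis r" by linarith
  then show ?case
  proof cases
    case 1
    then show ?thesis using A B fin
      by (intro exI[of _ "Cons False ` A \<union> Cons True ` B"]) (simp add: plus_leafset_Node_image card_Cons_image_Un)
  next
    case 2
    then show ?thesis using A fin
      by (intro exI[of _ "Cons False ` A \<union> Cons True ` {}"])
        (simp only: plus_leafset_Node_image, simp add: card_image)
  next
    case 3
    then show ?thesis using B fin
      by (intro exI[of _ "Cons False ` {} \<union> Cons True ` B"])
        (simp only: plus_leafset_Node_image, simp add: card_image)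
  qed
qed

lemma LIS_eq_lis: "LIS t = lis t"
proof -
  have "finite {S. plus_leafset t S}"
    by (rule finite_subset[of _ "Pow (leaves t)"]) (auto simp: plus_leafset_def finite_leaves)
  moreover obtain S where "plus_leafset t S" "card S = lis t"
    using ex_plus_leafset_card_lis by blast
  ultimately show ?thesis
    unfolding LIS_def by (intro Max_eqI) (auto simp: card_le_lis intro: image_eqI[of _ card S])
qed

definition sign_weight :: "real \<Rightarrow> bool \<Rightarrow> real" where
  "sign_weight p s = (if s then p else 1 - p)"

lemma bgw_prob_Leaf [simp]: "bgw_prob p Leaf = 1/2"
  by (simp add: bgw_prob_def)

lemma bgw_prob_Node: "bgw_prob p (Node s l r) = sign_weight p s / 2 * bgw_prob p l * bgw_prob p r"
  by (simp add: bgw_prob_def sign_weight_def power_add)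

lemma bgw_prob_nonneg: "0 \<le> p \<Longrightarrow> p \<le> 1 \<Longrightarrow> 0 \<le> bgw_prob p t"
  by (simp add: bgw_prob_def)

definition node_set :: "bool \<Rightarrow> stree set \<Rightarrow> stree set \<Rightarrow> stree set" where
  "node_set s A B = case_prod (Node s) ` (A \<times> B)"

lemma Node_in_node_set [simp]: "Node s l r \<in> node_set s' A B \<longleftrightarrow> s = s' \<and> l \<in> A \<and> r \<in> B"
  by (auto simp: node_set_def)

lemma Leaf_notin_node_set [simp]: "Leaf \<notin> node_set s A B"
  by (auto simp: node_set_def)

lemma node_set_Int:
  "node_set s A B \<inter> node_set s' A' B' = (if s = s' then node_set s (A \<inter> A') (B \<inter> B') else {})"
  by (auto simp: node_set_def)

lemma node_set_iff: "t \<in> node_set s A B \<longleftrightarrow> (\<exists>l r. t = Node s l r \<and> l \<in> A \<and> r \<in> B)"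
  by (auto simp: node_set_def)

lemma finite_node_set: "finite A \<Longrightarrow> finite B \<Longrightarrow> finite (node_set s A B)"
  by (simp add: node_set_def)

lemma inj_on_Node: "inj_on (case_prod (Node s)) X"
  by (auto simp: inj_on_def)

lemma sum_node_set:
  assumes "finite A" "finite B"
  shows "sum (bgw_prob p) (node_set s A B) = sign_weight p s / 2 * sum (bgw_prob p) A * sum (bgw_prob p) B"
proof -
  have "sum (bgw_prob p) (node_set s A B) = sum (bgw_prob p \<circ> case_prod (Node s)) (A \<times> B)"
    unfolding node_set_def by (rule sum.reindex[OF inj_on_Node])
  also have "\<dots> = (\<Sum>(l, r)\<in>A \<times> B. sign_weight p s / 2 * (bgw_prob p l * bgw_prob p r))"
    by (intro sum.cong) (auto simp: bgw_prob_Node)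
  also have "\<dots> = sign_weight p s / 2 * (\<Sum>(l, r)\<in>A \<times> B. bgw_prob p l * bgw_prob p r)"
    by (simp add: sum_distrib_left case_prod_unfold)
  also have "\<dots> = sign_weight p s / 2 * sum (bgw_prob p) A * sum (bgw_prob p) B"
    by (simp add: sum_product sum.cartesian_product)
  finally show ?thesis .
qed

fun children :: "stree \<Rightarrow> stree set" where
  "children Leaf = {}"
| "children (Node s l r) = {l, r}"

lemma finite_children: "finite (children t)"
  by (cases t) auto

lemma n_vert_pos: "0 < n_vert t"
  by (cases t) auto

lemma n_vert_children_less: "c \<in> children t \<Longrightarrow> n_vert c < n_vert t"
  by (cases t) auto

lemma sum_bgw_prob_le_1:
  assumes "0 \<le> p" "p \<le> 1"
  shows "sum (bgw_prob p) F \<le> 1"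
proof (cases "finite F")
  case True
  moreover have "F \<subseteq> {t. n_vert t \<le> Max (n_vert ` F)}"
    using True by auto
  then obtain n where "F \<subseteq> {t. n_vert t \<le> n}"
    by blast
  ultimately show ?thesis
  proof (induction n arbitrary: F)
    case 0
    have "t \<notin> F" for t
      using "0.prems"(2) n_vert_pos[of t] by auto
    then have "F = {}" by blast
    then show ?case by simp
  next
    case (Suc n)
    define K where "K = \<Union> (children ` F)"
    have K: "finite K" "K \<subseteq> {t. n_vert t \<le> n}"
      using Suc.prems n_vert_children_less unfolding K_def by (force simp: finite_children)+
    have "F \<subseteq> insert Leaf (node_set True K K \<union> node_set False K K)"
    proof
      fix t assume "t \<in> F"
      then have "children t \<subseteq> K"
        unfolding K_def by blast
      then show "t \<in> insert Leaf (node_set True K K \<union> node_set False K K)"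
        by (cases t) auto
    qed
    then have "sum (bgw_prob p) F \<le> sum (bgw_prob p) (insert Leaf (node_set True K K \<union> node_set False K K))"
      using K assms by (intro sum_mono2) (auto simp: finite_node_set bgw_prob_nonneg)
    also have "\<dots> = 1/2 + (sum (bgw_prob p) (node_set True K K) + sum (bgw_prob p) (node_set False K K))"
      using K by (simp add: sum.union_disjoint node_set_Int finite_node_set)
    also have "\<dots> = 1/2 + (sign_weight p True + sign_weight p False) / 2 * (sum (bgw_prob p) K)\<^sup>2"
      using K by (simp add: sum_node_set power2_eq_square add_divide_distrib distrib_right)
    also have "\<dots> \<le> 1/2 + (sign_weight p True + sign_weight p False) / 2 * 1"
      using Suc.IH[OF K] assms K
      by (intro add_left_mono mult_left_mono power_le_one) (auto simp: sign_weight_def bgw_prob_nonneg sum_nonneg)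
    also have "\<dots> = 1" by (simp add: sign_weight_def)
    finally show ?case .
  qed
qed simp

fun plus_comb :: "nat \<Rightarrow> stree" where
  "plus_comb 0 = Leaf"
| "plus_comb (Suc n) = Node True Leaf (plus_comb n)"

lemma Q_eq_lis: "Q p k = infsum (bgw_prob p) {t. k \<le> lis t}"
  by (simp add: Q_def LIS_eq_lis)

lemma q_eq_lis: "q p k = infsum (bgw_prob p) {t. lis t = k}"
  by (simp add: q_def LIS_eq_lis)

context
  fixes p :: real
  assumes p_nonneg: "0 \<le> p" and p_le_1: "p \<le> 1"
begin

lemma summable_on_bgw_prob: "bgw_prob p summable_on A"
proof -
  have "bgw_prob p summable_on UNIV"
    using bgw_prob_nonneg sum_bgw_prob_le_1 p_nonneg p_le_1
    by (intro nonneg_bounded_partial_sums_imp_summable_on[where C=1]) (auto intro: always_eventually)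
  then show ?thesis
    by (rule summable_on_subset_banach) simp
qed

lemma summable_on_bgw_prob_pairs: "(\<lambda>(l, r). bgw_prob p l * bgw_prob p r) summable_on A"
proof -
  have "(\<Sum>(l, r)\<in>X. bgw_prob p l * bgw_prob p r) \<le> 1" if "finite X" for X
  proof -
    have "(\<Sum>(l, r)\<in>X. bgw_prob p l * bgw_prob p r) \<le> (\<Sum>(l, r)\<in>fst ` X \<times> snd ` X. bgw_prob p l * bgw_prob p r)"
      using that p_nonneg p_le_1 by (intro sum_mono2) (auto simp: bgw_prob_nonneg intro: rev_image_eqI)
    also have "\<dots> = sum (bgw_prob p) (fst ` X) * sum (bgw_prob p) (snd ` X)"
      by (simp add: sum_product sum.cartesian_product)
    also have "\<dots> \<le> 1"
      using p_nonneg p_le_1 by (intro mult_le_one sum_bgw_prob_le_1 sum_nonneg bgw_prob_nonneg)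
    finally show ?thesis .
  qed
  then have "(\<lambda>(l, r). bgw_prob p l * bgw_prob p r) summable_on UNIV"
    using p_nonneg p_le_1
    by (intro nonneg_bounded_partial_sums_imp_summable_on[where C=1])
      (auto simp: bgw_prob_nonneg intro: always_eventually)
  then show ?thesis
    by (rule summable_on_subset_banach) simp
qed

lemma infsum_node_set:
  "infsum (bgw_prob p) (node_set s A B) = sign_weight p s / 2 * infsum (bgw_prob p) A * infsum (bgw_prob p) B"
proof -
  have "infsum (bgw_prob p) (node_set s A B) = infsum (bgw_prob p \<circ> case_prod (Node s)) (A \<times> B)"
    unfolding node_set_def by (rule infsum_reindex[OF inj_on_Node])
  also have "\<dots> = infsum (\<lambda>x. sign_weight p s / 2 * (\<lambda>(l, r). bgw_prob p l * bgw_prob p r) x) (A \<times> B)"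
    by (intro infsum_cong) (auto simp: bgw_prob_Node)
  also have "\<dots> = sign_weight p s / 2 * infsum (\<lambda>(l, r). bgw_prob p l * bgw_prob p r) (A \<times> B)"
    by (rule infsum_cmult_right')
  also have "infsum (\<lambda>(l, r). bgw_prob p l * bgw_prob p r) (A \<times> B)
      = infsum (\<lambda>l. infsum (\<lambda>r. bgw_prob p l * bgw_prob p r) B) A"
    using infsum_Sigma'_banach[of "\<lambda>l r. bgw_prob p l * bgw_prob p r" A "\<lambda>_. B"] summable_on_bgw_prob_pairs
    by simp
  also have "\<dots> = infsum (bgw_prob p) A * infsum (bgw_prob p) B"
    by (simp add: infsum_cmult_right' infsum_cmult_left')
  finally show ?thesis by simp
qed

lemma infsum_bgw_prob_Un:
  "A \<inter> B = {} \<Longrightarrow> infsum (bgw_prob p) (A \<union> B) = infsum (bgw_prob p) A + infsum (bgw_prob p) B"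
  by (intro infsum_Un_disjoint summable_on_bgw_prob)

lemma infsum_bgw_prob_UN:
  assumes "finite J" "disjoint_family_on A J"
  shows "infsum (bgw_prob p) (\<Union>j\<in>J. A j) = (\<Sum>j\<in>J. infsum (bgw_prob p) (A j))"
  using assms
proof (induction J rule: finite_induct)
  case (insert j J)
  then have "A j \<inter> (\<Union>i\<in>J. A i) = {}" and "disjoint_family_on A J"
    by (auto simp: disjoint_family_on_def)
  with insert show ?case
    by (simp add: infsum_bgw_prob_Un)
qed simp

lemma infsum_bgw_prob_mono: "A \<subseteq> B \<Longrightarrow> infsum (bgw_prob p) A \<le> infsum (bgw_prob p) B"
  using p_nonneg p_le_1 by (intro infsum_mono_neutral summable_on_bgw_prob) (auto simp: bgw_prob_nonneg)

lemma infsum_bgw_prob_UNIV: "infsum (bgw_prob p) UNIV = 1"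
proof -
  define Z where "Z = infsum (bgw_prob p) UNIV"
  have "UNIV = insert Leaf (node_set True UNIV UNIV \<union> node_set False UNIV UNIV)"
  proof -
    have "t \<in> insert Leaf (node_set True UNIV UNIV \<union> node_set False UNIV UNIV)" for t
      by (cases t) auto
    then show ?thesis by blast
  qed
  then have "Z = infsum (bgw_prob p) (insert Leaf (node_set True UNIV UNIV \<union> node_set False UNIV UNIV))"
    unfolding Z_def by (rule arg_cong)
  also have "\<dots> = infsum (bgw_prob p) {Leaf} + (infsum (bgw_prob p) (node_set True UNIV UNIV)
         + infsum (bgw_prob p) (node_set False UNIV UNIV))"
    by (subst insert_is_Un, subst infsum_bgw_prob_Un, simp, subst infsum_bgw_prob_Un)
      (simp_all add: node_set_Int)
  also have "\<dots> = 1/2 + 1/2 * Z\<^sup>2"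
    by (simp add: infsum_node_set Z_def sign_weight_def power2_eq_square field_simps)
  \<comment> \<open>The fixed-point equation has the double root 1; this is where criticality enters.\<close>
  finally have "Z = 1/2 + 1/2 * Z\<^sup>2" .
  then have "(Z - 1)\<^sup>2 = 0"
    by (simp add: power2_eq_square algebra_simps)
  then show ?thesis
    by (simp add: Z_def)
qed

lemma Q_1: "Q p 1 = 1"
  using lis_ge_1 by (simp add: Q_eq_lis infsum_bgw_prob_UNIV)

lemma q_eq_Q_diff: "q p k = Q p k - Q p (Suc k)"
proof -
  have "{t. k \<le> lis t} = {t. lis t = k} \<union> {t. Suc k \<le> lis t}"
    by auto
  then have "Q p k = q p k + Q p (Suc k)"
    unfolding Q_eq_lis q_eq_lis by (simp add: infsum_bgw_prob_Un disjoint_iff)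
  then show ?thesis
    by simp
qed

lemma decseq_Q: "decseq (Q p)"
  by (intro decseq_SucI) (simp add: Q_eq_lis infsum_bgw_prob_mono subset_iff)

lemma infsum_lis_less: "infsum (bgw_prob p) {t. lis t < k} = 1 - Q p k"
proof -
  have "{t. lis t < k} \<union> {t. k \<le> lis t} = UNIV"
    by auto
  then have "1 = infsum (bgw_prob p) ({t. lis t < k} \<union> {t. k \<le> lis t})"
    by (simp add: infsum_bgw_prob_UNIV)
  also have "\<dots> = infsum (bgw_prob p) {t. lis t < k} + Q p k"
    unfolding Q_eq_lis by (rule infsum_bgw_prob_Un) auto
  finally show ?thesis
    by simp
qed

lemma sum_q:
  assumes "1 \<le> k"
  shows "(\<Sum>j = 1..<k. q p j) = 1 - Q p k"
proof -
  have "(\<Sum>j = 1..<k. q p j) = - (\<Sum>j = 1..<k. Q p (Suc j) - Q p j)"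
    by (simp add: q_eq_Q_diff flip: sum_negf)
  also have "\<dots> = 1 - Q p k"
    using sum_Suc_diff'[OF assms, of "Q p"] Q_1 by linarith
  finally show ?thesis .
qed

lemma infsum_plus_root_lis_ge:
  "infsum (bgw_prob p) {t \<in> node_set True UNIV UNIV. k \<le> lis t}
     = p / 2 * (Q p k + (\<Sum>j = 1..<k. q p j * Q p (k - j)))"
proof -
  define Y where "Y j = node_set True {l. lis l = j} {r. k - j \<le> lis r}" for j
  have split: "{t \<in> node_set True UNIV UNIV. k \<le> lis t} = node_set True {l. k \<le> lis l} UNIV \<union> (\<Union>j\<in>{1..<k}. Y j)"
  proof (intro set_eqI iffI)
    fix t assume "t \<in> {t \<in> node_set True UNIV UNIV. k \<le> lis t}"
    then obtain l r where t: "t = Node True l r" and k: "k \<le> lis l + lis r"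
      by (auto simp: node_set_iff)
    show "t \<in> node_set True {l. k \<le> lis l} UNIV \<union> (\<Union>j\<in>{1..<k}. Y j)"
    proof (cases "k \<le> lis l")
      case False
      then have "lis l \<in> {1..<k}" "t \<in> Y (lis l)"
        using t k lis_ge_1[of l] by (auto simp: Y_def)
      then show ?thesis by blast
    qed (simp add: t)
  qed (auto simp: Y_def node_set_iff)
  have "node_set True {l. k \<le> lis l} UNIV \<inter> (\<Union>j\<in>{1..<k}. Y j) = {}"
    by (auto simp: Y_def node_set_iff)
  moreover have "disjoint_family_on Y {1..<k}"
    by (auto simp: disjoint_family_on_def Y_def node_set_iff)
  moreover have Y: "infsum (bgw_prob p) (Y j) = p / 2 * (q p j * Q p (k - j))" for j
    unfolding Y_def by (simp add: infsum_node_set sign_weight_def Q_eq_lis q_eq_lis)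
  ultimately have "infsum (bgw_prob p) {t \<in> node_set True UNIV UNIV. k \<le> lis t}
      = infsum (bgw_prob p) (node_set True {l. k \<le> lis l} UNIV) + (\<Sum>j = 1..<k. infsum (bgw_prob p) (Y j))"
    unfolding split by (simp add: infsum_bgw_prob_Un infsum_bgw_prob_UN)
  also have "\<dots> = p / 2 * Q p k + (\<Sum>j = 1..<k. p / 2 * (q p j * Q p (k - j)))"
    by (simp only: Y) (simp add: infsum_node_set infsum_bgw_prob_UNIV sign_weight_def flip: Q_eq_lis)
  finally show ?thesis
    by (simp add: sum_distrib_left distrib_left)
qed

lemma infsum_minus_root_lis_ge:
  "infsum (bgw_prob p) {t \<in> node_set False UNIV UNIV. k \<le> lis t} = (1 - p) / 2 * (Q p k + (1 - Q p k) * Q p k)"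
proof -
  have split: "{t \<in> node_set False UNIV UNIV. k \<le> lis t}
      = node_set False {l. k \<le> lis l} UNIV \<union> node_set False {l. lis l < k} {r. k \<le> lis r}"
    by (auto simp: node_set_iff)
  have "node_set False {l. k \<le> lis l} UNIV \<inter> node_set False {l. lis l < k} {r. k \<le> lis r} = {}"
    by (auto simp: node_set_iff)
  then have "infsum (bgw_prob p) {t \<in> node_set False UNIV UNIV. k \<le> lis t}
      = infsum (bgw_prob p) (node_set False {l. k \<le> lis l} UNIV)
        + infsum (bgw_prob p) (node_set False {l. lis l < k} {r. k \<le> lis r})"
    unfolding split by (rule infsum_bgw_prob_Un)
  also have "\<dots> = (1 - p) / 2 * Q p k + (1 - p) / 2 * ((1 - Q p k) * Q p k)"
    by (simp add: infsum_node_set infsum_bgw_prob_UNIV infsum_lis_less sign_weight_def flip: Q_eq_lis)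
  finally show ?thesis
    by (simp add: distrib_left)
qed

lemma Q_first_generation:
  assumes "2 \<le> k"
  shows "Q p k = p / 2 * (Q p k + (\<Sum>j = 1..<k. q p j * Q p (k - j)))
           + (1 - p) / 2 * (Q p k + (1 - Q p k) * Q p k)"
proof -
  let ?plus = "{t \<in> node_set True UNIV UNIV. k \<le> lis t}"
  let ?minus = "{t \<in> node_set False UNIV UNIV. k \<le> lis t}"
  have "t \<in> ?plus \<union> ?minus" if "k \<le> lis t" for t
    using that assms by (cases t) auto
  then have "{t. k \<le> lis t} = ?plus \<union> ?minus"
    by auto
  then have "Q p k = infsum (bgw_prob p) (?plus \<union> ?minus)"
    unfolding Q_eq_lis by (rule arg_cong)
  also have "\<dots> = infsum (bgw_prob p) ?plus + infsum (bgw_prob p) ?minus"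
    by (rule infsum_bgw_prob_Un) (auto simp: node_set_iff)
  finally show ?thesis
    by (simp only: infsum_plus_root_lis_ge infsum_minus_root_lis_ge)
qed

lemma Q_recursion:
  assumes "2 \<le> k"
  shows "p * (\<Sum>j = 1..<k. q p j * (Q p (k - j) - Q p k)) = (Q p k)\<^sup>2"
proof -
  define S where "S = (\<Sum>j = 1..<k. q p j * Q p (k - j))"
  have "(\<Sum>j = 1..<k. q p j * (Q p (k - j) - Q p k)) = S - (\<Sum>j = 1..<k. q p j) * Q p k"
    by (simp add: S_def right_diff_distrib sum_subtractf sum_distrib_right)
  also have "\<dots> = S - (1 - Q p k) * Q p k"
    using assms by (subst sum_q) auto
  finally show ?thesis
    using Q_first_generation[OF assms, folded S_def] by algebra
qed

lemma Q_pos: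
  assumes "0 < p"
  shows "0 < Q p k"
proof -
  have "lis (plus_comb n) = Suc n" for n
    by (induction n) auto
  then have "bgw_prob p (plus_comb k) \<le> Q p k"
    using infsum_bgw_prob_mono[of "{plus_comb k}" "{t. k \<le> lis t}"] by (simp add: Q_eq_lis)
  moreover have "0 < bgw_prob p (plus_comb n)" for n
    using assms by (induction n) (simp_all add: bgw_prob_Node sign_weight_def)
  ultimately show ?thesis
    by (meson less_le_trans)
qed

end

lemma sum_window_increments_ge:
  fixes D :: "nat \<Rightarrow> real"
  assumes "incseq D" and "j \<le> a + 1"
  shows "real j * (D (a + n + 1 - j) - D a) \<le> (\<Sum>m<n. D (a + 1 + m) - D (a + 1 + m - j))"
proof -
  have inner: "(\<Sum>m<n. D (a + 1 + m - i) - D (a + 1 + m - Suc i)) = D (a - i + n) - D (a - i)"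
    if "i < j" for i
  proof -
    have "(\<Sum>m<n. D (a + 1 + m - i) - D (a + 1 + m - Suc i)) = (\<Sum>m<n. D (a - i + Suc m) - D (a - i + m))"
      using that assms(2) by (intro sum.cong) (auto simp: Suc_diff_le)
    also have "\<dots> = D (a - i + n) - D (a - i)"
      using sum_lessThan_telescope[of "\<lambda>m. D (a - i + m)" n] by (simp only: add_0_right)
    finally show ?thesis .
  qed
  have outer: "D (a + 1 + m) - D (a + 1 + m - j) = (\<Sum>i<j. D (a + 1 + m - i) - D (a + 1 + m - Suc i))" for m
    using sum_lessThan_telescope'[of "\<lambda>i. D (a + 1 + m - i)" j] by (simp only: diff_zero)
  have "(\<Sum>m<n. D (a + 1 + m) - D (a + 1 + m - j))
      = (\<Sum>m<n. \<Sum>i<j. D (a + 1 + m - i) - D (a + 1 + m - Suc i))"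
    by (simp only: outer)
  also have "\<dots> = (\<Sum>i<j. \<Sum>m<n. D (a + 1 + m - i) - D (a + 1 + m - Suc i))"
    by (rule sum.swap)
  also have "\<dots> = (\<Sum>i<j. D (a - i + n) - D (a - i))"
    by (rule sum.cong[OF refl inner]) simp
  also have "\<dots> \<ge> (\<Sum>i<j. D (a + n + 1 - j) - D a)"
  proof (rule sum_mono)
    fix i assume "i \<in> {..<j}"
    then have "D (a + n + 1 - j) \<le> D (a - i + n)" "D (a - i) \<le> D a"
      using assms by (auto intro: incseqD)
    then show "D (a + n + 1 - j) - D a \<le> D (a - i + n) - D (a - i)"
      by simp
  qed
  finally show ?thesis
    by simp
qed

lemma sum_weighted_decrements:
  fixes Q :: "nat \<Rightarrow> real"
  shows "(\<Sum>i = 1..<l. real i * (Q i - Q (Suc i))) = (\<Sum>i = 1..<l. Q i) - real (l - 1) * Q l"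
proof (induction l)
  case (Suc l)
  show ?case
  proof (cases "l = 0")
    case False
    then have "(\<Sum>i = 1..<Suc l. real i * (Q i - Q (Suc i)))
        = (\<Sum>i = 1..<l. Q i) - real (l - 1) * Q l + real l * (Q l - Q (Suc l))"
      using Suc.IH by simp
    also have "\<dots> = (\<Sum>i = 1..<Suc l. Q i) - real l * Q (Suc l)"
      using False by (simp add: of_nat_diff algebra_simps)
    finally show ?thesis
      by simp
  qed simp
qed simp

lemma doubling_growth:
  fixes Q :: "nat \<Rightarrow> real"
  assumes "\<And>n. Q (2 ^ n * L) \<le> 5/4 * Q (2 ^ Suc n * L)"
  shows "(8/5) ^ n * (real L * Q L) \<le> real (2 ^ n * L) * Q (2 ^ n * L)"
proof (induction n)
  case (Suc n)
  have "(8/5) ^ Suc n * (real L * Q L) \<le> 8/5 * (real (2 ^ n * L) * Q (2 ^ n * L))"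
    using mult_left_mono[OF Suc.IH, of "8/5"] by (simp add: mult_ac)
  also have "\<dots> \<le> 8/5 * (real (2 ^ n * L) * (5/4 * Q (2 ^ Suc n * L)))"
    using assms by (intro mult_left_mono) auto
  also have "\<dots> = real (2 ^ Suc n * L) * Q (2 ^ Suc n * L)"
    by simp
  finally show ?case .
qed simp

lemma doubling_partial_sums:
  fixes Q :: "nat \<Rightarrow> real"
  assumes "decseq Q" "\<And>k. 0 \<le> Q k" "1 \<le> L"
    and "\<And>n. Q (2 ^ n * L) \<le> 5/4 * Q (2 ^ Suc n * L)"
  shows "(\<Sum>i = 1..<2 ^ n * L. Q i) \<le> (\<Sum>i = 1..<L. Q i) + 3 * (real (2 ^ n * L) * Q (2 ^ n * L))"
proof (induction n)
  case 0
  show ?case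
    using assms(2) by simp
next
  case (Suc n)
  let ?L = "2 ^ n * L"
  have "1 \<le> ?L"
    using assms(3) by simp
  then have "(\<Sum>i = 1..<2 ^ Suc n * L. Q i) = (\<Sum>i = 1..<?L. Q i) + (\<Sum>i = ?L..<2 * ?L. Q i)"
    by (simp add: sum.atLeastLessThan_concat mult.assoc)
  also have "(\<Sum>i = ?L..<2 * ?L. Q i) \<le> (\<Sum>i = ?L..<2 * ?L. Q ?L)"
    using assms(1) by (intro sum_mono) (simp add: decseqD)
  also have "\<dots> = real ?L * Q ?L"
    by simp
  finally have "(\<Sum>i = 1..<2 ^ Suc n * L. Q i) \<le> (\<Sum>i = 1..<L. Q i) + 4 * (real ?L * Q ?L)"
    using Suc.IH by simp
  also have "4 * (real ?L * Q ?L) \<le> 4 * (real ?L * (5/4 * Q (2 ^ Suc n * L)))"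
    using assms(4) by (intro mult_left_mono) auto
  also have "\<dots> \<le> 3 * (real (2 ^ Suc n * L) * Q (2 ^ Suc n * L))"
    using assms(2) by simp
  finally show ?case
    by simp
qed

context
  fixes Q :: "nat \<Rightarrow> real" and p :: real
  assumes decseq: "decseq Q" and pos: "\<And>k. 0 < Q k" and p_pos: "0 < p"
    and convolution_bound:
      "\<And>k. 2 \<le> k \<Longrightarrow> p * (\<Sum>j = 1..<k. (Q j - Q (Suc j)) * (Q (k - j) - Q k)) \<le> (Q k)\<^sup>2"
begin

lemma incseq_inverse: "incseq (\<lambda>k. 1 / Q k)"
  using decseq pos by (auto simp: incseq_def decseq_def intro: divide_left_mono mult_pos_pos)

lemma decrement_nonneg: "0 \<le> Q j - Q (Suc j)"
  using decseq by (simp add: decseq_Suc_iff)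

lemma reciprocal_increments_bound:
  assumes "2 \<le> k"
  shows "p * (\<Sum>j = 1..<k. (Q j - Q (Suc j)) * (1 / Q k - 1 / Q (k - j))) \<le> 1"
proof -
  have summand: "(Q k)\<^sup>2 * (1 / Q k - 1 / Q (k - j)) \<le> Q (k - j) - Q k" for j
  proof -
    have le: "Q k \<le> Q (k - j)"
      using decseq by (simp add: decseqD)
    have "(Q k)\<^sup>2 * (1 / Q k - 1 / Q (k - j)) = Q k / Q (k - j) * (Q (k - j) - Q k)"
      using pos[of k] pos[of "k - j"] by (simp add: field_simps power2_eq_square)
    also have "\<dots> \<le> 1 * (Q (k - j) - Q k)"
      using le pos[of "k - j"] by (intro mult_right_mono) auto
    finally show ?thesis
      by simp
  qed
  have "(Q k)\<^sup>2 * (p * (\<Sum>j = 1..<k. (Q j - Q (Suc j)) * (1 / Q k - 1 / Q (k - j))))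
      = p * (\<Sum>j = 1..<k. (Q j - Q (Suc j)) * ((Q k)\<^sup>2 * (1 / Q k - 1 / Q (k - j))))"
    by (simp add: sum_distrib_left mult.left_commute)
  also have "\<dots> \<le> p * (\<Sum>j = 1..<k. (Q j - Q (Suc j)) * (Q (k - j) - Q k))"
    using p_pos by (intro mult_left_mono sum_mono mult_left_mono[OF summand decrement_nonneg]) auto
  also have "\<dots> \<le> (Q k)\<^sup>2 * 1"
    using convolution_bound[OF assms] by simp
  finally show ?thesis
    using pos[of k] by (simp add: mult_le_cancel_left)
qed

lemma truncated_mean_reciprocal_gap:
  "p * (\<Sum>j = 1..M. real j * (Q j - Q (Suc j))) * (1 / Q (4 * M) - 1 / Q (2 * M)) \<le> 3 * real M"
proof -
  define D where "D k = 1 / Q k" for k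
  define T where "T k j = (Q j - Q (Suc j)) * (D k - D (k - j))" for k j
  have D: "incseq D"
    unfolding D_def by (rule incseq_inverse)
  have T_nonneg: "0 \<le> T k j" for k j
    unfolding T_def using decrement_nonneg D by (simp add: incseqD)
  have row: "p * (\<Sum>j = 1..M. T (2 * M + 1 + m) j) \<le> 1" for m
  proof (cases "M = 0")
    case False
    have "p * (\<Sum>j = 1..M. T (2 * M + 1 + m) j) \<le> p * (\<Sum>j = 1..<2 * M + 1 + m. T (2 * M + 1 + m) j)"
      using T_nonneg p_pos by (intro mult_left_mono sum_mono2) auto
    also have "\<dots> \<le> 1"
      using reciprocal_increments_bound[of "2 * M + 1 + m"] False by (simp add: T_def D_def)
    finally show ?thesis .
  qed simp
  have column: "real j * (Q j - Q (Suc j)) * (D (4 * M) - D (2 * M)) \<le> (\<Sum>m<3 * M. T (2 * M + 1 + m) j)"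
    if "j \<in> {1..M}" for j
  proof -
    have "D (4 * M) \<le> D (2 * M + 3 * M + 1 - j)"
      using that by (intro incseqD[OF D]) auto
    then have "real j * (D (4 * M) - D (2 * M)) \<le> real j * (D (2 * M + 3 * M + 1 - j) - D (2 * M))"
      by (intro mult_left_mono) auto
    also have "\<dots> \<le> (\<Sum>m<3 * M. D (2 * M + 1 + m) - D (2 * M + 1 + m - j))"
      using that by (intro sum_window_increments_ge D) auto
    finally have "(Q j - Q (Suc j)) * (real j * (D (4 * M) - D (2 * M)))
        \<le> (Q j - Q (Suc j)) * (\<Sum>m<3 * M. D (2 * M + 1 + m) - D (2 * M + 1 + m - j))"
      by (rule mult_left_mono[OF _ decrement_nonneg])
    then show ?thesis
      by (simp add: T_def sum_distrib_left mult_ac)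
  qed
  have "p * (\<Sum>j = 1..M. real j * (Q j - Q (Suc j))) * (D (4 * M) - D (2 * M))
      = p * (\<Sum>j = 1..M. real j * (Q j - Q (Suc j)) * (D (4 * M) - D (2 * M)))"
    by (simp add: sum_distrib_right mult.assoc)
  also have "\<dots> \<le> p * (\<Sum>j = 1..M. \<Sum>m<3 * M. T (2 * M + 1 + m) j)"
    using p_pos column by (intro mult_left_mono sum_mono) auto
  also have "\<dots> = (\<Sum>m<3 * M. p * (\<Sum>j = 1..M. T (2 * M + 1 + m) j))"
    by (subst sum.swap) (simp add: sum_distrib_left)
  also have "\<dots> \<le> (\<Sum>m<3 * M. 1)"
    using row by (intro sum_mono) auto
  finally show ?thesis
    by (simp add: D_def)
qed

lemma tail_doubling:
  assumes "12 \<le> p * C" "0 \<le> C"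
    and large: "\<And>l. l0 < l \<Longrightarrow> C * real l * Q l < (\<Sum>i = 1..<l. real i * (Q i - Q (Suc i)))"
    and "l0 < M"
  shows "Q (2 * M) \<le> 5/4 * Q (4 * M)"
proof -
  define B where "B = (\<Sum>j = 1..M. real j * (Q j - Q (Suc j)))"
  define gap where "gap = 1 / Q (4 * M) - 1 / Q (2 * M)"
  have "1 \<le> M"
    using assms(4) by simp
  have "gap \<ge> 0"
    using incseqD[OF incseq_inverse, of "2 * M" "4 * M"] by (simp add: gap_def)
  have "Q (2 * M) \<le> Q (Suc M)"
    using decseq \<open>1 \<le> M\<close> by (simp add: decseqD)
  then have "C * real M * Q (2 * M) \<le> C * real (Suc M) * Q (Suc M)"
    using assms(2) pos[of "2 * M"] by (intro mult_mono) auto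
  also have "\<dots> < B"
    using large[of "Suc M"] assms(4) by (simp add: B_def atLeastLessThanSuc_atLeastAtMost)
  finally have "p * (C * real M * Q (2 * M)) * gap \<le> p * B * gap"
    using p_pos \<open>gap \<ge> 0\<close> by (intro mult_right_mono mult_left_mono) auto
  also have "\<dots> \<le> 3 * real M"
    using truncated_mean_reciprocal_gap by (simp add: B_def gap_def)
  finally have "p * C * real M * (Q (2 * M) * gap) \<le> 3 * real M"
    by (simp add: mult_ac)
  moreover have "12 * real M * (Q (2 * M) * gap) \<le> p * C * real M * (Q (2 * M) * gap)"
    using assms(1) pos[of "2 * M"] \<open>gap \<ge> 0\<close> by (intro mult_right_mono) auto
  ultimately have "4 * (Q (2 * M) * gap) \<le> 1"
    using \<open>1 \<le> M\<close> by simp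
  then show ?thesis
    using pos[of "2 * M"] pos[of "4 * M"] by (simp add: gap_def field_simps)
qed

lemma truncated_mean_not_eventually_large:
  assumes "12 \<le> C" "12 \<le> p * C"
    and large: "\<And>l. l0 < l \<Longrightarrow> C * real l * Q l < (\<Sum>i = 1..<l. real i * (Q i - Q (Suc i)))"
  shows False
proof -
  define F where "F l = (\<Sum>i = 1..<l. Q i)" for l
  define X where "X l = real l * Q l" for l
  define L where "L = 2 * Suc l0"
  have L_large: "l0 < 2 ^ n * L" for n
    using mult_le_mono1[of 1 "2 ^ n" L] by (simp add: L_def)
  have doubling: "Q (2 ^ n * L) \<le> 5/4 * Q (2 ^ Suc n * L)" for n
  proof -
    have "l0 < 2 ^ n * Suc l0"
      using mult_le_mono1[of 1 "2 ^ n" "Suc l0"] by simp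
    from tail_doubling[OF assms(2) _ large this] assms(1) show ?thesis
      by (simp add: L_def mult_ac)
  qed
  have bounded: "9 * X (2 ^ n * L) < F L" for n
  proof -
    have "12 * X (2 ^ n * L) \<le> C * X (2 ^ n * L)"
      using assms(1) pos[of "2 ^ n * L"] by (intro mult_right_mono) (auto simp: X_def)
    also have "\<dots> < (\<Sum>i = 1..<2 ^ n * L. real i * (Q i - Q (Suc i)))"
      using large[OF L_large] by (simp add: X_def mult.assoc)
    also have "\<dots> \<le> F (2 ^ n * L)"
      unfolding F_def sum_weighted_decrements using pos[of "2 ^ n * L"] by simp
    also have "\<dots> \<le> F L + 3 * X (2 ^ n * L)"
      unfolding F_def X_def
      using decseq pos doubling by (intro doubling_partial_sums) (auto simp: L_def less_imp_le)
    finally show ?thesis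
      by simp
  qed
  have "0 < X L"
    using pos[of L] by (simp add: X_def L_def)
  then obtain n where "F L / (9 * X L) < (8/5) ^ n"
    using real_arch_pow[of "8/5"] by auto
  then have "F L < 9 * ((8/5) ^ n * X L)"
    using \<open>0 < X L\<close> by (simp add: field_simps)
  also have "\<dots> \<le> 9 * X (2 ^ n * L)"
    using doubling_growth[OF doubling, of n] by (simp add: X_def)
  finally show False
    using bounded[of n] by simp
qed

lemma infinitely_many_truncated_mean_bounds:
  "\<exists>C > 0. infinite {l :: nat. 1 \<le> l \<and> (\<Sum>i = 1..<l. real i * (Q i - Q (Suc i))) \<le> C * real l * Q l}"
proof -
  define C where "C = 12 / p + 12"
  have C: "12 \<le> C" "12 \<le> p * C"
    using p_pos by (auto simp: C_def field_simps)
  have "infinite {l. 1 \<le> l \<and> (\<Sum>i = 1..<l. real i * (Q i - Q (Suc i))) \<le> C * real l * Q l}"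
  proof
    assume "finite {l. 1 \<le> l \<and> (\<Sum>i = 1..<l. real i * (Q i - Q (Suc i))) \<le> C * real l * Q l}"
    then obtain l0 where l0: "\<And>l. 1 \<le> l \<Longrightarrow> (\<Sum>i = 1..<l. real i * (Q i - Q (Suc i))) \<le> C * real l * Q l \<Longrightarrow> l \<le> l0"
      by (auto simp: finite_nat_set_iff_bounded_le)
    show False
    proof (rule truncated_mean_not_eventually_large[OF C])
      fix l assume "l0 < l"
      then show "C * real l * Q l < (\<Sum>i = 1..<l. real i * (Q i - Q (Suc i)))"
        using l0[of l] by (force simp: not_less)
    qed
  qed
  then show ?thesis
    using C by (intro exI[of _ C]) auto
qed

end

theorem lemma6p5:
  fixes p :: real
  assumes "0 < p" and "p < 1"
  shows "\<exists>C > 0. infinite {l :: nat. l \<ge> 1 \<and>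
           (\<Sum>i = 1..<l. real i * q p i) \<le> C * real l * Q p l}"
proof -
  have p: "0 \<le> p" "p \<le> 1"
    using assms by auto
  have "p * (\<Sum>j = 1..<k. (Q p j - Q p (Suc j)) * (Q p (k - j) - Q p k)) \<le> (Q p k)\<^sup>2" if "2 \<le> k" for k
    using Q_recursion[OF p that] by (simp add: q_eq_Q_diff[OF p])
  then show ?thesis
    using infinitely_many_truncated_mean_bounds[OF decseq_Q[OF p] Q_pos[OF p assms(1)] assms(1)]
    by (simp add: q_eq_Q_diff[OF p])
qed

end
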